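(* Let $G$ be an infinite connected bipartite graph with maximum degree $d$ and Cheeger constant $h$, let $M\ge1$ be an integer, and let $a,b$ be integers with $0\le b-a\le 2M$. Let $G'$ be a finite set of vertices of $G$. Assume $h\ge 4M\log\big(d^4(4M+1)\big)$ and let $f\sim\nu^{a,b}_{G',M}$. Then for all $v_0\in G'$ and all $n\ge1$, $$\mathbb{P}\big(|A(f,v_0)|=n\big)\le\exp\Big(-\frac{hn}{4M}\Big).$$
   Context: The Cheeger constant is $h=\inf\{|\partial S|/|S|: S\subset V,\ 0<|S|<\infty\}$ where $\partial S$ is the set of vertices outside $S$ with a neighbour in $S$. The two partite classes of $G$ are called even and odd. $\nu^{a,b}_{G',M}$ is the uniform probability measure on the set of $M$-Lipschitz functions $f\colon G'\cup\partial G'\to\mathbb{Z}$ (i.e. $|f(u)-f(v)|\le M$ for adjacent $u,v$) such that $f(v)\in\{a,\dots,b\}$ for even $v\in\partial G'$ and $f(v)\in\{b-M,\dots,a+M\}$ for odd $v\in\partial G'$. For such $f$, $B(f)$ is the set of odd vertices $v\in G'\cup\partial G'$ with $f(v)\notin\{b-M,\dots,a+M\}$ together with the even vertices $v\in G'\cup\partial G'$ with $f(v)\notin\{a,\dots,b\}$. $A(f,v)$ is the connected component containing $v$ of the graph on $B(f)$ in which two vertices are joined when their graph distance in $G$ is at most $2$ (empty if $v\notin B(f)$). *)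

theory Defs
  imports "HOL-Probability.Probability"
begin

text \<open>A graph on vertex type 'v (vertex set = UNIV) with adjacency relation E.\<close>

definition simple_graph :: "('v \<Rightarrow> 'v \<Rightarrow> bool) \<Rightarrow> bool" where
  "simple_graph E \<longleftrightarrow> (\<forall>u v. E u v \<longrightarrow> E v u) \<and> (\<forall>v. \<not> E v v)"

definition connected_graph :: "('v \<Rightarrow> 'v \<Rightarrow> bool) \<Rightarrow> bool" where
  "connected_graph E \<longleftrightarrow> (\<forall>u v. E\<^sup>*\<^sup>* u v)"

definition bipartition :: "('v \<Rightarrow> 'v \<Rightarrow> bool) \<Rightarrow> ('v \<Rightarrow> bool) \<Rightarrow> bool" where
  "bipartition E isev \<longleftrightarrow> (\<forall>u v. E u v \<longrightarrow> (isev u \<longleftrightarrow> \<not> isev v))"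

definition max_degree :: "('v \<Rightarrow> 'v \<Rightarrow> bool) \<Rightarrow> nat \<Rightarrow> bool" where
  "max_degree E d \<longleftrightarrow> (\<forall>v. finite {u. E v u} \<and> card {u. E v u} \<le> d)
                       \<and> (\<exists>v. card {u. E v u} = d)"

definition vboundary :: "('v \<Rightarrow> 'v \<Rightarrow> bool) \<Rightarrow> 'v set \<Rightarrow> 'v set" where
  "vboundary E S = {v. v \<notin> S \<and> (\<exists>u\<in>S. E v u)}"

definition cheeger :: "('v \<Rightarrow> 'v \<Rightarrow> bool) \<Rightarrow> real" where
  "cheeger E = Inf {real (card (vboundary E S)) / real (card S) | S. finite S \<and> S \<noteq> {}}"

definition dist_le2 :: "('v \<Rightarrow> 'v \<Rightarrow> bool) \<Rightarrow> 'v \<Rightarrow> 'v \<Rightarrow> bool" where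
  "dist_le2 E u v \<longleftrightarrow> u = v \<or> E u v \<or> (\<exists>w. E u w \<and> E w v)"

definition lip_funs :: "('v \<Rightarrow> 'v \<Rightarrow> bool) \<Rightarrow> ('v \<Rightarrow> bool) \<Rightarrow> 'v set \<Rightarrow> int \<Rightarrow> int \<Rightarrow> int
                        \<Rightarrow> ('v \<Rightarrow> int) set" where
  "lip_funs E isev G' M a b =
     {f. (\<forall>v. v \<notin> G' \<union> vboundary E G' \<longrightarrow> f v = 0)
       \<and> (\<forall>u\<in>G' \<union> vboundary E G'. \<forall>v\<in>G' \<union> vboundary E G'. E u v \<longrightarrow> \<bar>f u - f v\<bar> \<le> M)
       \<and> (\<forall>v\<in>vboundary E G'. isev v \<longrightarrow> f v \<in> {a..b})
       \<and> (\<forall>v\<in>vboundary E G'. \<not> isev v \<longrightarrow> f v \<in> {b-M..a+M})}"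

definition nu :: "('v \<Rightarrow> 'v \<Rightarrow> bool) \<Rightarrow> ('v \<Rightarrow> bool) \<Rightarrow> 'v set \<Rightarrow> int \<Rightarrow> int \<Rightarrow> int
                  \<Rightarrow> ('v \<Rightarrow> int) pmf" where
  "nu E isev G' M a b = pmf_of_set (lip_funs E isev G' M a b)"

definition Bset :: "('v \<Rightarrow> 'v \<Rightarrow> bool) \<Rightarrow> ('v \<Rightarrow> bool) \<Rightarrow> 'v set \<Rightarrow> int \<Rightarrow> int \<Rightarrow> int
                    \<Rightarrow> ('v \<Rightarrow> int) \<Rightarrow> 'v set" where
  "Bset E isev G' M a b f =
     {v \<in> G' \<union> vboundary E G'. (\<not> isev v \<and> f v \<notin> {b-M..a+M}) \<or> (isev v \<and> f v \<notin> {a..b})}"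

definition Acomp :: "('v \<Rightarrow> 'v \<Rightarrow> bool) \<Rightarrow> ('v \<Rightarrow> bool) \<Rightarrow> 'v set \<Rightarrow> int \<Rightarrow> int \<Rightarrow> int
                    \<Rightarrow> ('v \<Rightarrow> int) \<Rightarrow> 'v \<Rightarrow> 'v set" where
  "Acomp E isev G' M a b f v =
     (let B = Bset E isev G' M a b f in
      {u. v \<in> B \<and> (\<lambda>x y. x \<in> B \<and> y \<in> B \<and> dist_le2 E x y)\<^sup>*\<^sup>* v u})"

end

theory Submission
  imports Defs
begin

(*
  A Peierls argument. Let \<rho> = 2M/(2M+1). If A(f, v0) = A, then f is bad on A and good at every
  vertex of G' \<union> \<partial>G' outside A within distance 2 of A, in particular on \<partial>A. Overwriting f on
  A \<union> \<partial>A by arbitrary good values yields distinct admissible functions. Conversely, the bad values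
  on A can be revealed from outside A with at most 4M choices per vertex, and each vertex of \<partial>A
  is adjacent to a bad value, which excludes at least one of its at most 2M+1 good values.
  Hence P(A(f, v0) = A) \<le> (4M)^|A| \<rho>^|\<partial>A| \<le> (4M)^n \<rho>^(hn).
  Such sets A are connected in the distance-two graph, whose degrees are at most d^2, and a
  depth-first exploration word of length 2(n - 1) describes each of them, so there are at most
  (4d^2)^(n-1) of them. Finally h \<le> d, and the hypothesis on h gives 16 M d^2 \<rho>^h \<le> exp (-h/(4M)).
*)

section \<open>Counting Lipschitz functions\<close>

lemma rtranclp_exit_edge:
  assumes "R\<^sup>*\<^sup>* x0 z0" "x0 \<in> T" "z0 \<notin> T"
  shows "\<exists>x z. R\<^sup>*\<^sup>* x0 x \<and> x \<in> T \<and> z \<notin> T \<and> R x z"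
  using assms(1,3)
proof (induction rule: rtranclp_induct)
  case base
  then show ?case using assms(2) by blast
next
  case (step y z)
  then show ?case by (cases "y \<in> T") auto
qed

lemma card_le_card_image_mult:
  assumes inj: "inj_on (\<lambda>x. (p x, q x)) X" and fin: "finite (p ` X)"
    and fibre: "\<And>x. x \<in> X \<Longrightarrow> q x \<in> C (p x)"
    and C: "\<And>x. x \<in> X \<Longrightarrow> finite (C (p x)) \<and> card (C (p x)) \<le> K"
  shows "finite X \<and> card X \<le> card (p ` X) * K"
proof -
  let ?S = "SIGMA y:p ` X. C y"
  have sub: "(\<lambda>x. (p x, q x)) ` X \<subseteq> ?S" using fibre by auto
  have finS: "finite ?S" using fin C by auto
  have "card X = card ((\<lambda>x. (p x, q x)) ` X)" using card_image[OF inj] by simp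
  also have "\<dots> \<le> card ?S" using card_mono[OF finS sub] .
  also have "\<dots> = (\<Sum>y\<in>p ` X. card (C y))" using fin C by (auto intro: card_SigmaI)
  also have "\<dots> \<le> card (p ` X) * K"
    using sum_bounded_above[of "p ` X" "\<lambda>y. card (C y)" K] C by auto
  finally show ?thesis
    using finite_imageD[OF finite_subset[OF sub finS] inj] by blast
qed

context
  fixes E :: "'v \<Rightarrow> 'v \<Rightarrow> bool" and A :: "'v set" and F :: "('v \<Rightarrow> int) set"
    and Z :: "'v \<Rightarrow> int set" and M :: int and c :: nat
  assumes connected: "\<And>u v. E\<^sup>*\<^sup>* u v" and infinite: "infinite (UNIV :: 'v set)"
    and finite_A: "finite A"
    and Lipschitz:
      "\<And>\<phi> x y. \<phi> \<in> F \<Longrightarrow> x \<in> A \<Longrightarrow> y \<in> A \<Longrightarrow> E x y \<Longrightarrow> \<bar>\<phi> x - \<phi> y\<bar> \<le> M"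
    and anchored: "\<And>\<phi> x u. \<phi> \<in> F \<Longrightarrow> x \<in> A \<Longrightarrow> u \<notin> A \<Longrightarrow> E x u \<Longrightarrow> \<phi> x \<in> Z x"
    and card_Z: "\<And>x. x \<in> A \<Longrightarrow> finite (Z x) \<and> card (Z x) \<le> c"
    and c_ge: "2 * M + 1 \<le> int c"
begin

lemma card_restrict_image_grow:
  assumes S: "S \<subset> A" and fin: "finite ((\<lambda>\<phi>. restrict \<phi> S) ` F)"
  shows "\<exists>x\<in>A - S. finite ((\<lambda>\<phi>. restrict \<phi> (insert x S)) ` F) \<and>
           card ((\<lambda>\<phi>. restrict \<phi> (insert x S)) ` F) \<le> card ((\<lambda>\<phi>. restrict \<phi> S) ` F) * c"
proof -
  obtain x0 where "x0 \<in> A - S" using S by blast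
  moreover obtain z0 where "z0 \<notin> A - S" using infinite finite_A ex_new_if_finite[of "A - S"] by auto
  ultimately obtain x z where xz: "x \<in> A - S" "z \<notin> A - S" "E x z"
    using rtranclp_exit_edge[of E x0 z0 "A - S"] connected by blast
  \<comment> \<open>The value at x is confined by z: by the Lipschitz condition if z is already revealed,
    by the anchoring if z lies outside A.\<close>
  define Y where "Y \<sigma> = (if z \<in> S then {\<sigma> z - M .. \<sigma> z + M} else Z x)" for \<sigma> :: "'v \<Rightarrow> int"
  let ?G = "(\<lambda>\<phi>. restrict \<phi> (insert x S)) ` F"
  have image_eq: "(\<lambda>g. restrict g S) ` ?G = (\<lambda>\<phi>. restrict \<phi> S) ` F"
    using xz(1) by (simp add: image_image restrict_restrict Int_absorb1 subset_insertI)
  have "finite ?G \<and> card ?G \<le> card ((\<lambda>g. restrict g S) ` ?G) * c"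
  proof (rule card_le_card_image_mult[where q = "\<lambda>g. g x" and C = Y])
    show "inj_on (\<lambda>g. (restrict g S, g x)) ?G"
    proof (rule inj_onI)
      fix g1 g2 assume "g1 \<in> ?G" "g2 \<in> ?G" and eq: "(restrict g1 S, g1 x) = (restrict g2 S, g2 x)"
      then have ext: "g1 \<in> extensional (insert x S)" "g2 \<in> extensional (insert x S)" by auto
      from eq have "restrict g1 S = restrict g2 S" "g1 x = g2 x" by auto
      then show "g1 = g2" by (intro extensionalityI[OF ext]) (metis insert_iff restrict_apply')
    qed
    show "finite ((\<lambda>g. restrict g S) ` ?G)" using fin image_eq by simp
  next
    fix g assume "g \<in> ?G"
    then obtain \<phi> where \<phi>: "\<phi> \<in> F" "g = restrict \<phi> (insert x S)" by blast
    show "g x \<in> Y (restrict g S)"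
    proof (cases "z \<in> S")
      case True
      then show ?thesis using Lipschitz[OF \<phi>(1), of x z] xz S \<phi>(2) by (auto simp: Y_def)
    next
      case False
      then show ?thesis using anchored[OF \<phi>(1), of x z] xz \<phi>(2) by (auto simp: Y_def)
    qed
    show "finite (Y (restrict g S)) \<and> card (Y (restrict g S)) \<le> c"
      using card_Z xz(1) c_ge by (auto simp: Y_def)
  qed
  then show ?thesis using image_eq xz(1) by auto
qed

lemma card_restrict_image_le:
  "finite ((\<lambda>\<phi>. restrict \<phi> A) ` F) \<and> card ((\<lambda>\<phi>. restrict \<phi> A) ` F) \<le> c ^ card A"
proof -
  have "\<exists>S\<subseteq>A. card S = k \<and> finite ((\<lambda>\<phi>. restrict \<phi> S) ` F)
          \<and> card ((\<lambda>\<phi>. restrict \<phi> S) ` F) \<le> c ^ k" if "k \<le> card A" for k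
    using that
  proof (induction k)
    case 0
    have sub: "(\<lambda>\<phi>. restrict \<phi> {}) ` F \<subseteq> {\<lambda>_. undefined}" by auto
    then have "finite ((\<lambda>\<phi>. restrict \<phi> {}) ` F)" by (rule finite_subset) simp
    moreover have "card ((\<lambda>\<phi>. restrict \<phi> {}) ` F) \<le> 1" using card_mono[OF _ sub] by simp
    ultimately show ?case by (metis card.empty empty_subsetI power_0)
  next
    case (Suc k)
    obtain S where S: "S \<subseteq> A" "card S = k" "finite ((\<lambda>\<phi>. restrict \<phi> S) ` F)"
        "card ((\<lambda>\<phi>. restrict \<phi> S) ` F) \<le> c ^ k"
      using Suc.IH Suc.prems Suc_leD by blast
    then have "S \<subset> A" using Suc.prems by auto
    then obtain x where x: "x \<in> A - S" "finite ((\<lambda>\<phi>. restrict \<phi> (insert x S)) ` F)"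
        "card ((\<lambda>\<phi>. restrict \<phi> (insert x S)) ` F) \<le> card ((\<lambda>\<phi>. restrict \<phi> S) ` F) * c"
      using card_restrict_image_grow S(3) by blast
    have "card (insert x S) = Suc k" using S(1,2) x(1) finite_A by (simp add: finite_subset)
    moreover have "card ((\<lambda>\<phi>. restrict \<phi> (insert x S)) ` F) \<le> c ^ Suc k"
      using x(3) S(4) by (simp add: order_trans)
    moreover have "insert x S \<subseteq> A" using x(1) S(1) by blast
    ultimately show ?case using x(2) by blast
  qed
  then obtain S where "S \<subseteq> A" "card S = card A" "finite ((\<lambda>\<phi>. restrict \<phi> S) ` F)"
      "card ((\<lambda>\<phi>. restrict \<phi> S) ` F) \<le> c ^ card A"
    by blast
  moreover have "S = A" using calculation(1,2) finite_A by (simp add: card_subset_eq)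
  ultimately show ?thesis by simp
qed

end

section \<open>Counting connected sets\<close>

datatype move = is_Push: Push (push_index: nat) | Pop

fun explore_step ::
  "('v \<Rightarrow> nat \<Rightarrow> 'v) \<Rightarrow> 'v list \<times> 'v set \<Rightarrow> move \<Rightarrow> 'v list \<times> 'v set" where
  "explore_step nbr (st, V) (Push i) = (nbr (hd st) i # st, insert (nbr (hd st) i) V)"
| "explore_step nbr (st, V) Pop = (tl st, V)"

abbreviation explore ::
  "('v \<Rightarrow> nat \<Rightarrow> 'v) \<Rightarrow> 'v list \<times> 'v set \<Rightarrow> move list \<Rightarrow> 'v list \<times> 'v set" where
  "explore nbr \<equiv> foldl (explore_step nbr)"

definition explored :: "('v \<Rightarrow> nat \<Rightarrow> 'v) \<Rightarrow> 'v \<Rightarrow> move list \<Rightarrow> 'v set" where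
  "explored nbr v0 w = snd (explore nbr ([v0], {v0}) w)"

lemma explore_visited_Un:
  "explore nbr (st, V) w = (fst (explore nbr (st, {}) w), V \<union> snd (explore nbr (st, {}) w))"
proof (induction w arbitrary: st V)
  case Nil
  then show ?case by simp
next
  case (Cons m w)
  show ?case
  proof (cases m)
    case (Push i)
    define x where "x = nbr (hd st) i"
    have "explore nbr (st, V) (m # w) = explore nbr (x # st, insert x V) w"
      and "explore nbr (st, {}) (m # w) = explore nbr (x # st, {x}) w"
      using Push by (simp_all add: x_def)
    then show ?thesis using Cons.IH[of "x # st" "insert x V"] Cons.IH[of "x # st" "{x}"] by auto
  next
    case Pop
    then show ?thesis using Cons.IH[of "tl st" V] by simp
  qed
qed

lemma explore_visited_prefix:
  assumes "x \<in> snd (explore nbr (st, V) w)"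
  shows "x \<in> V \<or> (\<exists>w1 w2. w = w1 @ w2 \<and> hd (fst (explore nbr (st, V) w1)) = x)"
  using assms
proof (induction w arbitrary: st V)
  case Nil
  then show ?case by simp
next
  case (Cons m w)
  show ?case
  proof (cases m)
    case (Push i)
    let ?y = "nbr (hd st) i"
    have "x \<in> snd (explore nbr (?y # st, insert ?y V) w)" using Cons.prems Push by simp
    then have "x \<in> insert ?y V \<or> (\<exists>w1 w2. w = w1 @ w2 \<and> hd (fst (explore nbr (?y # st, insert ?y V) w1)) = x)"
      by (rule Cons.IH)
    then show ?thesis
    proof (elim disjE exE conjE)
      assume "x \<in> insert ?y V"
      then consider "x = ?y" | "x \<in> V" by blast
      then show ?thesis
      proof cases
        case 1
        then show ?thesis using Push by (intro disjI2 exI[of _ "[m]"] exI[of _ w]) simp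
      qed simp
    next
      fix w1 w2 assume "w = w1 @ w2" "hd (fst (explore nbr (?y # st, insert ?y V) w1)) = x"
      then show ?thesis using Push by (intro disjI2 exI[of _ "m # w1"] exI[of _ w2]) simp
    qed
  next
    case Pop
    then have "x \<in> snd (explore nbr (tl st, V) w)" using Cons.prems by simp
    then have "x \<in> V \<or> (\<exists>w1 w2. w = w1 @ w2 \<and> hd (fst (explore nbr (tl st, V) w1)) = x)"
      by (rule Cons.IH)
    then show ?thesis
    proof (elim disjE exE conjE)
      fix w1 w2 assume "w = w1 @ w2" "hd (fst (explore nbr (tl st, V) w1)) = x"
      then show ?thesis using Pop by (intro disjI2 exI[of _ "m # w1"] exI[of _ w2]) simp
    qed simp
  qed
qed

lemma explored_prefix:
  assumes "x \<in> explored nbr v0 w"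
  shows "\<exists>w1 w2. w = w1 @ w2 \<and> hd (fst (explore nbr ([v0], {v0}) w1)) = x"
  using explore_visited_prefix[OF assms[unfolded explored_def]]
proof (elim disjE)
  assume "x \<in> {v0}"
  then show ?thesis by (intro exI[of _ "[]"] exI[of _ w]) simp
qed

lemma explored_insert_detour:
  assumes "hd (fst (explore nbr ([v0], {v0}) w1)) = p"
  shows "explored nbr v0 (w1 @ [Push i, Pop] @ w2) = insert (nbr p i) (explored nbr v0 (w1 @ w2))"
proof -
  obtain st V where sV: "explore nbr ([v0], {v0}) w1 = (st, V)" by fastforce
  have "hd st = p" using assms sV by simp
  then show ?thesis
    using sV explore_visited_Un[of nbr st "insert (nbr p i) V" w2] explore_visited_Un[of nbr st V w2]
    by (simp add: explored_def)
qed

definition tour_words :: "nat \<Rightarrow> nat \<Rightarrow> move list set" where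
  "tour_words D m =
     {w. length w = 2 * m \<and> length (filter is_Push w) = m \<and> (\<forall>i. Push i \<in> set w \<longrightarrow> i < D)}"

lemma move_list_eqI:
  "map is_Push w = map is_Push w' \<Longrightarrow> map push_index (filter is_Push w) = map push_index (filter is_Push w')
    \<Longrightarrow> w = w'"
proof (induction w arbitrary: w')
  case Nil
  then show ?case by simp
next
  case (Cons m w)
  then obtain m' w'' where w': "w' = m' # w''" by (cases w') auto
  with Cons show ?case by (cases m; cases m') auto
qed

lemma card_tour_words_le: "finite (tour_words D m) \<and> card (tour_words D m) \<le> (4 * D) ^ m"
proof -
  let ?code = "\<lambda>w. (map is_Push w, map push_index (filter is_Push w))"
  let ?T = "{bs. set bs \<subseteq> (UNIV :: bool set) \<and> length bs = 2 * m}
          \<times> {is. set is \<subseteq> {..<D} \<and> length is = m}"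
  have inj: "inj_on ?code (tour_words D m)" by (rule inj_onI) (auto intro: move_list_eqI)
  have sub: "?code ` tour_words D m \<subseteq> ?T"
  proof (rule image_subsetI)
    fix w assume w: "w \<in> tour_words D m"
    have "push_index l < D" if "l \<in> set w" "is_Push l" for l
    proof -
      from that(2) obtain i where "l = Push i" by (cases l) auto
      then show ?thesis using w that(1) by (simp add: tour_words_def)
    qed
    then show "?code w \<in> ?T" using w by (auto simp: tour_words_def)
  qed
  have finT: "finite ?T" by (intro finite_cartesian_product finite_lists_length_eq) auto
  have "card (tour_words D m) = card (?code ` tour_words D m)" using card_image[OF inj] by simp
  also have "\<dots> \<le> card ?T" using card_mono[OF finT sub] .
  also have "\<dots> = (4 * D) ^ m"
    using card_lists_length_eq[of "UNIV :: bool set" "2 * m"] card_lists_length_eq[of "{..<D}" m]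
    by (simp add: card_cartesian_product power_mult power_mult_distrib)
  finally show ?thesis using finite_imageD[OF finite_subset[OF sub finT] inj] by blast
qed

lemma from_nat_into_finite_surj:
  assumes "finite A" "x \<in> A"
  shows "\<exists>i<card A. from_nat_into A i = x"
proof -
  have "to_nat_on A x < card A"
    using bij_betwE[OF to_nat_on_finite[OF assms(1)]] assms(2) by blast
  moreover have "from_nat_into A (to_nat_on A x) = x"
    using from_nat_into_to_nat_on[OF countable_finite[OF assms(1)] assms(2)] .
  ultimately show ?thesis by blast
qed

text \<open>Connectivity of A in the graph R, phrased so that A can be grown from v0 one vertex
  at a time.\<close>

definition connected_from :: "('v \<Rightarrow> 'v \<Rightarrow> bool) \<Rightarrow> 'v \<Rightarrow> 'v set \<Rightarrow> bool" where
  "connected_from R v0 A \<longleftrightarrow>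
     v0 \<in> A \<and> (\<forall>S. v0 \<in> S \<longrightarrow> S \<subset> A \<longrightarrow> (\<exists>p\<in>S. \<exists>x\<in>A - S. R p x))"

lemma connected_from_explored:
  fixes R :: "'v \<Rightarrow> 'v \<Rightarrow> bool"
  assumes finA: "finite A" and conn: "connected_from R v0 A"
    and deg: "\<And>p. finite {x. R p x} \<and> card {x. R p x} \<le> D"
  defines "nbr \<equiv> \<lambda>p. from_nat_into {x. R p x}"
  shows "\<exists>w\<in>tour_words D (card A - 1). explored nbr v0 w = A"
proof -
  have v0: "v0 \<in> A" using conn by (simp add: connected_from_def)
  have grow: "\<exists>w\<in>tour_words D k. explored nbr v0 w \<subseteq> A \<and> card (explored nbr v0 w) = Suc k"
    if "Suc k \<le> card A" for k
    using that
  proof (induction k)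
    case 0
    have "[] \<in> tour_words D 0" by (simp add: tour_words_def)
    then show ?case using v0 by (intro bexI[of _ "[]"]) (auto simp: explored_def)
  next
    case (Suc k)
    obtain w where w: "w \<in> tour_words D k" "explored nbr v0 w \<subseteq> A"
        "card (explored nbr v0 w) = Suc k"
      using Suc.IH[OF Suc_leD[OF Suc.prems]] by blast
    let ?S = "explored nbr v0 w"
    have "v0 \<in> ?S" by (simp add: explored_def explore_visited_Un[of _ _ "{v0}"])
    moreover have "?S \<subset> A" using w(2,3) Suc.prems by auto
    ultimately obtain p x where px: "p \<in> ?S" "x \<in> A - ?S" "R p x"
      using conn unfolding connected_from_def by blast
    obtain i where i: "i < card {x. R p x}" "nbr p i = x"
      using from_nat_into_finite_surj[of "{x. R p x}" x] deg[of p] px(3) by (auto simp: nbr_def)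
    obtain w1 w2 where w12: "w = w1 @ w2" "hd (fst (explore nbr ([v0], {v0}) w1)) = p"
      using explored_prefix[OF px(1)] by blast
    let ?w = "w1 @ [Push i, Pop] @ w2"
    have explored_w: "explored nbr v0 ?w = insert x ?S"
      using explored_insert_detour[OF w12(2)] i(2) w12(1) by simp
    have "i < D" using i(1) deg[of p] by linarith
    then have "?w \<in> tour_words D (Suc k)" using w(1) w12(1) by (auto simp: tour_words_def)
    moreover have "card (insert x ?S) = Suc (Suc k)"
      using w(3) px(2) finite_subset[OF w(2) finA] by simp
    ultimately show ?case using explored_w w(2) px(2) by (intro bexI[of _ ?w]) auto
  qed
  have "card A \<noteq> 0" using v0 finA by auto
  then obtain w where
    "w \<in> tour_words D (card A - 1)" "explored nbr v0 w \<subseteq> A" "card (explored nbr v0 w) = card A"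
    using grow[of "card A - 1"] by auto
  then show ?thesis using card_subset_eq[OF finA] by blast
qed

lemma card_connected_from_le:
  fixes R :: "'v \<Rightarrow> 'v \<Rightarrow> bool" and v0 :: 'v and n :: nat
  assumes deg: "\<And>p. finite {x. R p x} \<and> card {x. R p x} \<le> D"
  defines "C \<equiv> {A. finite A \<and> card A = n \<and> connected_from R v0 A}"
  shows "finite C \<and> card C \<le> (4 * D) ^ (n - 1)"
proof -
  let ?nbr = "\<lambda>p. from_nat_into {x. R p x}"
  let ?W = "explored ?nbr v0 ` tour_words D (n - 1)"
  have sub: "C \<subseteq> ?W"
  proof
    fix A assume "A \<in> C"
    then have A: "finite A" "card A = n" "connected_from R v0 A" by (auto simp: C_def)
    obtain w where "w \<in> tour_words D (n - 1)" "explored ?nbr v0 w = A"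
      using connected_from_explored[OF A(1,3) deg] A(2) by blast
    then show "A \<in> ?W" by (auto intro: rev_image_eqI)
  qed
  have finW: "finite ?W" using card_tour_words_le by blast
  have "card C \<le> card ?W" by (rule card_mono[OF finW sub])
  also have "\<dots> \<le> card (tour_words D (n - 1))" by (rule card_image_le) (use card_tour_words_le in blast)
  also have "\<dots> \<le> (4 * D) ^ (n - 1)" using card_tour_words_le by blast
  finally show ?thesis using finite_subset[OF sub finW] by blast
qed

section \<open>Numerical estimates\<close>

lemma second_order_Bernoulli:
  fixes x :: real
  assumes "0 \<le> x"
  shows "1 + real n * x + real n * (real n - 1) / 2 * x\<^sup>2 \<le> (1 + x) ^ n"
proof (induction n)
  case 0
  then show ?case by simp
next
  case (Suc n)
  have "(1 + real n * x + real n * (real n - 1) / 2 * x\<^sup>2) * (1 + x)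
      - (1 + real (Suc n) * x + real (Suc n) * (real (Suc n) - 1) / 2 * x\<^sup>2)
      = real n * (real n - 1) / 2 * x ^ 3"
    by (simp add: field_simps power2_eq_square power3_eq_cube)
  moreover have "0 \<le> real n * (real n - 1) / 2 * x ^ 3" using assms by (cases n) auto
  ultimately have "1 + real (Suc n) * x + real (Suc n) * (real (Suc n) - 1) / 2 * x\<^sup>2
      \<le> (1 + real n * x + real n * (real n - 1) / 2 * x\<^sup>2) * (1 + x)"
    by linarith
  also have "\<dots> \<le> (1 + x) ^ n * (1 + x)" using Suc assms by (intro mult_right_mono) auto
  finally show ?case by (simp add: mult.commute)
qed

lemma one_plus_inverse_power_ge:
  assumes "2 \<le> k"
  shows "9 / 4 \<le> (1 + 1 / real k) ^ k"
proof -
  have "9 / 4 \<le> 1 + real k * (1 / real k) + real k * (real k - 1) / 2 * (1 / real k)\<^sup>2"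
    using assms by (simp add: field_simps power2_eq_square)
  also have "\<dots> \<le> (1 + 1 / real k) ^ k" by (rule second_order_Bernoulli) simp
  finally show ?thesis .
qed

lemma exp_of_nat_less:
  assumes "0 < k"
  shows "exp (real k) < (272 / 100) ^ k"
proof -
  have "exp (real k) = exp 1 ^ k" using exp_of_nat_mult[of k 1] by simp
  also have "\<dots> < (272 / 100) ^ k" using e_less_272 assms by (intro power_strict_mono) auto
  finally show ?thesis .
qed

lemma exp_81_50_le: "exp (81 / 50 :: real) \<le> 81 / 16"
proof -
  have "exp (81 / 50 :: real) ^ 50 = exp (real (81 :: nat))" by (simp flip: exp_of_nat_mult)
  also have "\<dots> < (272 / 100) ^ 81" by (rule exp_of_nat_less) simp
  also have "\<dots> \<le> (81 / 16) ^ 50" by (simp add: power_divide)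
  finally have "exp (81 / 50 :: real) < 81 / 16" by (rule power_less_imp_less_base) simp
  then show ?thesis by simp
qed

lemma ln_ratio_le:
  fixes M :: int
  assumes "1 \<le> M"
  shows "4 * M * ln (2 * M / (2 * M + 1)) \<le> - 81 / 50"
proof -
  define k where "k = nat (2 * M)"
  define \<rho> where "\<rho> = real_of_int (2 * M) / (2 * M + 1)"
  have k: "real k = 2 * M" "2 \<le> k" using assms by (auto simp: k_def)
  have \<rho>: "0 < \<rho>" "\<rho> = 1 / (1 + 1 / real k)" using assms k(1) by (auto simp: \<rho>_def field_simps)
  have "\<rho> ^ k \<le> 4 / 9"
    using one_plus_inverse_power_ge[OF k(2)] by (simp add: \<rho>(2) power_one_over field_simps)
  then have "(\<rho> ^ k)\<^sup>2 \<le> (4 / 9)\<^sup>2" using \<rho>(1) by (intro power_mono) auto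
  then have "\<rho> ^ (2 * k) \<le> 16 / 81" by (simp add: power_mult mult.commute power2_eq_square)
  have "4 * M * ln \<rho> = ln (\<rho> ^ (2 * k))" using \<rho>(1) k(1) by (simp add: ln_realpow)
  also have "\<dots> \<le> ln (16 / 81)" using \<rho>(1) \<open>\<rho> ^ (2 * k) \<le> 16 / 81\<close> by simp
  also have "\<dots> = - ln (81 / 16)" by (simp add: ln_div)
  also have "\<dots> \<le> - 81 / 50" using exp_81_50_le ln_ge_iff[of "81 / 16" "81 / 50"] by simp
  finally show ?thesis by (simp add: \<rho>_def)
qed

lemma degree_ge_72:
  fixes m d :: real
  assumes m: "1 \<le> m" and d: "1 \<le> d" and h: "4 * m * ln (d ^ 4 * (4 * m + 1)) \<le> d"
  shows "72 * m \<le> d"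
proof -
  define t where "t = d / (4 * m)"
  define X where "X = d ^ 4 * (4 * m + 1)"
  have "1 * 5 \<le> d ^ 4 * (4 * m + 1)" using d m by (intro mult_mono) auto
  then have X5: "5 \<le> X" by (simp add: X_def)
  have "ln X \<le> t" using h m by (simp add: t_def X_def field_simps)
  then have X_le: "X \<le> exp t" using X5 by (metis exp_le_cancel_iff exp_ln less_le_trans zero_less_numeral)
  have d_eq: "d = 4 * m * t" using m by (simp add: t_def)
  have t0: "0 \<le> t" using d m by (simp add: t_def)
  have "1 \<le> m ^ 4" using m by simp
  then have "t ^ 4 \<le> m ^ 4 * t ^ 4" using mult_right_mono[of 1 "m ^ 4" "t ^ 4"] t0 by simp
  then have "1280 * t ^ 4 \<le> 256 * (m ^ 4 * t ^ 4) * (4 * m + 1)"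
    using mult_mono[of "256 * t ^ 4" "256 * (m ^ 4 * t ^ 4)" 5 "4 * m + 1"] m t0 by simp
  also have "\<dots> = X" by (simp add: X_def d_eq power_mult_distrib)
  finally have X_ge: "1280 * t ^ 4 \<le> X" .
  \<comment> \<open>exp t \<ge> 1280 t^4 fails on [1, 18]; four bootstrapping steps cross this interval.\<close>
  have bootstrap: "real k < t" if "0 < k" "(272 / 100) ^ k \<le> 1280 * j ^ 4" "0 \<le> j" "j \<le> t"
    for k :: nat and j :: real
  proof -
    have "exp (real k) < 1280 * j ^ 4" using exp_of_nat_less[OF that(1)] that(2) by linarith
    also have "\<dots> \<le> 1280 * t ^ 4" using that(3,4) power_mono[of j t 4] by simp
    also have "\<dots> \<le> exp t" using X_ge X_le by linarith
    finally show ?thesis by simp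
  qed
  have "exp 1 < exp t" using e_less_272 X5 X_le by linarith
  then have "1 < t" by simp
  then have "real (7 :: nat) < t" by (intro bootstrap[of 7 1]) (auto simp: power_divide)
  then have "real (14 :: nat) < t" by (intro bootstrap[of 14 7]) (auto simp: power_divide)
  then have "real (17 :: nat) < t" by (intro bootstrap[of 17 14]) (auto simp: power_divide)
  then have "real (18 :: nat) < t" by (intro bootstrap[of 18 17]) (auto simp: power_divide)
  then show ?thesis using m by (simp add: d_eq)
qed

lemma degree_term_le_exp:
  fixes m d s :: real
  assumes m: "1 \<le> m" and d72: "72 * m \<le> d" and X: "d ^ 4 * (4 * m + 1) \<le> exp s"
  shows "16 * m * d\<^sup>2 \<le> exp (31 / 50 * s)"
proof -
  define P where "P = 16 * m * d\<^sup>2"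
  have "P ^ 50 = 2 ^ 200 * m ^ 50 * d ^ 100" by (simp add: P_def power_mult_distrib flip: power_mult)
  also have "\<dots> \<le> d ^ 24 * (4 * m + 1) ^ 31 * d ^ 100"
  proof -
    have "2 ^ 200 * m ^ 50 \<le> (72 ^ 24 * 4 ^ 31) * m ^ 55"
      using m by (intro mult_mono power_increasing) auto
    also have "\<dots> = (72 * m) ^ 24 * (4 * m) ^ 31" by (simp add: power_mult_distrib power_add[symmetric])
    also have "\<dots> \<le> d ^ 24 * (4 * m + 1) ^ 31" using d72 m by (intro mult_mono power_mono) auto
    finally show ?thesis by (intro mult_right_mono) auto
  qed
  also have "\<dots> = (d ^ 4 * (4 * m + 1)) ^ 31" by (simp add: power_mult_distrib flip: power_mult)
  also have "\<dots> \<le> exp s ^ 31" using X m d72 by (intro power_mono) auto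
  also have "\<dots> = exp (31 / 50 * s) ^ 50" by (simp flip: exp_of_nat_mult)
  finally show ?thesis
    using power_mono_iff[of P "exp (31 / 50 * s)" 50] m by (simp add: P_def)
qed

lemma key_inequality:
  fixes M :: int and d h :: real
  assumes M: "1 \<le> M" and d: "1 \<le> d" and h: "4 * M * ln (d ^ 4 * (4 * M + 1)) \<le> h"
    and h_le_d: "h \<le> d"
  shows "16 * M * d\<^sup>2 * (2 * M / (2 * M + 1)) powr h \<le> exp (- (h / (4 * M)))"
proof -
  define m where "m = real_of_int M"
  define s where "s = h / (4 * m)"
  define X where "X = d ^ 4 * (4 * m + 1)"
  have m: "1 \<le> m" using M by (simp add: m_def)
  have "1 * 5 \<le> d ^ 4 * (4 * m + 1)" using d m by (intro mult_mono) auto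
  then have X5: "5 \<le> X" by (simp add: X_def)
  have "ln X \<le> s" using h m by (simp add: s_def X_def m_def field_simps)
  then have X_le: "X \<le> exp s" using X5 by (metis exp_le_cancel_iff exp_ln less_le_trans zero_less_numeral)
  have s0: "0 \<le> s" using \<open>ln X \<le> s\<close> X5 by (smt (verit) ln_ge_zero)
  have "72 * m \<le> d" using degree_ge_72[OF m d] h h_le_d by (simp add: m_def)
  then have "16 * m * d\<^sup>2 \<le> exp (31 / 50 * s)" using degree_term_le_exp m X_le by (simp add: X_def)
  moreover have "(2 * m / (2 * m + 1)) powr h = exp (s * (4 * m * ln (2 * m / (2 * m + 1))))"
    using m by (simp add: powr_def s_def field_simps)
  moreover have "\<dots> \<le> exp (s * (- 81 / 50))"
    using mult_left_mono[OF ln_ratio_le[OF M] s0] by (simp add: m_def)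
  ultimately have "16 * m * d\<^sup>2 * (2 * m / (2 * m + 1)) powr h \<le> exp (31 / 50 * s) * exp (s * (- 81 / 50))"
    using m by (intro mult_mono) auto
  also have "\<dots> = exp (- s)" by (simp flip: exp_add)
  finally show ?thesis by (simp add: s_def m_def)
qed

section \<open>The Peierls argument\<close>

lemma cheeger_le:
  assumes "finite S" "S \<noteq> {}"
  shows "cheeger E \<le> real (card (vboundary E S)) / real (card S)"
  unfolding cheeger_def
proof (rule cInf_lower)
  show "real (card (vboundary E S)) / real (card S)
      \<in> {real (card (vboundary E S)) / real (card S) |S. finite S \<and> S \<noteq> {}}"
    using assms by blast
  show "bdd_below {real (card (vboundary E S)) / real (card S) |S. finite S \<and> S \<noteq> {}}"
    by (rule bdd_belowI[of _ 0]) auto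
qed

locale lipschitz_setting =
  fixes E :: "'v \<Rightarrow> 'v \<Rightarrow> bool" and isev :: "'v \<Rightarrow> bool" and G' :: "'v set"
    and M a b :: int and d :: nat
  assumes infinite_vertices: "infinite (UNIV :: 'v set)" and simple: "simple_graph E"
    and connected: "connected_graph E" and bipartite: "bipartition E isev"
    and degree: "max_degree E d" and M_ge_1: "M \<ge> 1"
    and a_le_b: "0 \<le> b - a" and b_minus_a_le: "b - a \<le> 2 * M" and finite_G': "finite G'"
begin

abbreviation Adm :: "('v \<Rightarrow> int) set" where
  "Adm \<equiv> lip_funs E isev G' M a b"

abbreviation bad_set :: "('v \<Rightarrow> int) \<Rightarrow> 'v set" where
  "bad_set f \<equiv> Bset E isev G' M a b f"

abbreviation bad_comp :: "('v \<Rightarrow> int) \<Rightarrow> 'v \<Rightarrow> 'v set" where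
  "bad_comp f v \<equiv> Acomp E isev G' M a b f v"

definition good :: "'v \<Rightarrow> int \<Rightarrow> bool" where
  "good v y \<longleftrightarrow> (if isev v then a \<le> y \<and> y \<le> b else b - M \<le> y \<and> y \<le> a + M)"

definition nbhd :: "'v set \<Rightarrow> 'v set" where
  "nbhd S = S \<union> vboundary E S"

lemma E_sym: "E u v \<Longrightarrow> E v u"
  using simple by (auto simp: simple_graph_def)

lemma E_rtranclp: "E\<^sup>*\<^sup>* u v"
  using connected by (auto simp: connected_graph_def)

lemma isev_E: "E u v \<Longrightarrow> isev u \<longleftrightarrow> \<not> isev v"
  using bipartite by (auto simp: bipartition_def)

lemma finite_nbrs: "finite {u. E v u}"
  using degree by (auto simp: max_degree_def)

lemma card_nbrs_le: "card {u. E v u} \<le> d"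
  using degree by (auto simp: max_degree_def)

lemma vboundary_nbr: "u \<in> vboundary E S \<Longrightarrow> \<exists>v\<in>S. E v u"
  by (auto simp: vboundary_def intro: E_sym)

lemma finite_vboundary: "finite S \<Longrightarrow> finite (vboundary E S)"
proof -
  assume "finite S"
  moreover have "vboundary E S \<subseteq> (\<Union>v\<in>S. {u. E v u})" using vboundary_nbr by blast
  ultimately show ?thesis using finite_nbrs by (meson finite_UN_I finite_subset)
qed

lemma finite_nbhd: "finite S \<Longrightarrow> finite (nbhd S)"
  by (simp add: nbhd_def finite_vboundary)

lemma nbhd_mono: "A \<subseteq> G' \<Longrightarrow> nbhd A \<subseteq> nbhd G'"
  by (auto simp: nbhd_def vboundary_def)

lemma good_Lipschitz: "E u v \<Longrightarrow> good u x \<Longrightarrow> good v y \<Longrightarrow> \<bar>x - y\<bar> \<le> M"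
  using isev_E[of u v] by (auto simp: good_def split: if_splits)

lemma Adm_iff: "f \<in> Adm \<longleftrightarrow> (\<forall>v. v \<notin> nbhd G' \<longrightarrow> f v = 0)
    \<and> (\<forall>u\<in>nbhd G'. \<forall>v\<in>nbhd G'. E u v \<longrightarrow> \<bar>f u - f v\<bar> \<le> M)
    \<and> (\<forall>v\<in>vboundary E G'. good v (f v))"
  by (auto simp: lip_funs_def nbhd_def good_def)

lemma Bset_eq: "bad_set f = {v \<in> nbhd G'. \<not> good v (f v)}"
  by (auto simp: Bset_def nbhd_def good_def)

lemma Bset_subset: "f \<in> Adm \<Longrightarrow> bad_set f \<subseteq> G'"
  by (auto simp: Bset_eq Adm_iff nbhd_def)

lemma finite_Adm: "finite Adm"
proof -
  have "finite ((\<lambda>\<phi>. restrict \<phi> (nbhd G')) ` Adm)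
      \<and> card ((\<lambda>\<phi>. restrict \<phi> (nbhd G')) ` Adm) \<le> nat (4 * M) ^ card (nbhd G')"
  proof (rule card_restrict_image_le[where E = E and M = M and Z = "\<lambda>_. {a - M .. a + 2 * M}"])
    fix \<phi> x u assume \<phi>: "\<phi> \<in> Adm" and x: "x \<in> nbhd G'" and u: "u \<notin> nbhd G'" "E x u"
    then have "x \<in> vboundary E G'" using E_sym by (auto simp: nbhd_def vboundary_def)
    then have "good x (\<phi> x)" using \<phi> by (simp add: Adm_iff)
    then show "\<phi> x \<in> {a - M .. a + 2 * M}" using a_le_b b_minus_a_le M_ge_1 by (auto simp: good_def split: if_splits)
  qed (use E_rtranclp infinite_vertices finite_nbhd finite_G' M_ge_1 in \<open>auto simp: Adm_iff\<close>)
  moreover have "inj_on (\<lambda>\<phi>. restrict \<phi> (nbhd G')) Adm"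
  proof (rule inj_onI)
    fix \<phi> \<psi> assume "\<phi> \<in> Adm" "\<psi> \<in> Adm" and eq: "restrict \<phi> (nbhd G') = restrict \<psi> (nbhd G')"
    have "\<phi> v = \<psi> v" for v
    proof (cases "v \<in> nbhd G'")
      case True
      then show ?thesis using fun_cong[OF eq, of v] by (simp only: restrict_apply')
    next
      case False
      then show ?thesis using \<open>\<phi> \<in> Adm\<close> \<open>\<psi> \<in> Adm\<close> by (simp add: Adm_iff)
    qed
    then show "\<phi> = \<psi>" by (rule ext)
  qed
  ultimately show ?thesis using finite_imageD by blast
qed

lemma Adm_nonempty: "Adm \<noteq> {}"
proof -
  define base where "base v = (if isev v then a else a + M)" for v
  have good_base: "good v (base v)" for v using a_le_b b_minus_a_le M_ge_1 by (auto simp: good_def base_def)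
  have "(\<lambda>v. if v \<in> nbhd G' then base v else 0) \<in> Adm"
    using good_Lipschitz[OF _ good_base good_base] by (auto simp: Adm_iff good_base nbhd_def)
  then show ?thesis by blast
qed

definition n_good :: "'v \<Rightarrow> nat" where
  "n_good v = card {y. good v y}"

lemma good_set: "{y. good v y} = (if isev v then {a..b} else {b - M..a + M})"
  by (auto simp: good_def)

lemma finite_good: "finite {y. good v y}"
  by (simp add: good_set)

lemma n_good_bounds: "1 \<le> n_good v" "int (n_good v) \<le> 2 * M + 1"
  using a_le_b b_minus_a_le M_ge_1 by (auto simp: n_good_def good_set)

lemma exists_good_far_from_bad:
  assumes "E u v" "\<not> good v y"
  shows "\<exists>e. good u e \<and> M < \<bar>e - y\<bar>"
proof (cases "isev v")
  case True
  then have u: "\<not> isev u" using isev_E[OF assms(1)] by simp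
  consider "b < y" | "y < a" using assms(2) True by (auto simp: good_def)
  then show ?thesis
  proof cases
    case 1
    then show ?thesis using u a_le_b b_minus_a_le by (intro exI[of _ "b - M"]) (auto simp: good_def)
  next
    case 2
    then show ?thesis using u a_le_b b_minus_a_le by (intro exI[of _ "a + M"]) (auto simp: good_def)
  qed
next
  case False
  then have u: "isev u" using isev_E[OF assms(1)] by simp
  consider "a + M < y" | "y < b - M" using assms(2) False by (auto simp: good_def)
  then show ?thesis
  proof cases
    case 1
    then show ?thesis using u a_le_b by (intro exI[of _ a]) (auto simp: good_def)
  next
    case 2
    then show ?thesis using u a_le_b by (intro exI[of _ b]) (auto simp: good_def)
  qed
qed

lemma card_good_near_bad_le:
  assumes "E u v" "\<not> good v y"
  shows "card {z. good u z \<and> \<bar>z - y\<bar> \<le> M} \<le> n_good u - 1"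
proof -
  obtain e where e: "good u e" "M < \<bar>e - y\<bar>" using exists_good_far_from_bad[OF assms] by blast
  have "{z. good u z \<and> \<bar>z - y\<bar> \<le> M} \<subseteq> {z. good u z} - {e}" using e by auto
  then have "card {z. good u z \<and> \<bar>z - y\<bar> \<le> M} \<le> card ({z. good u z} - {e})"
    using finite_good by (intro card_mono) auto
  also have "\<dots> = n_good u - 1" using e(1) finite_good by (simp add: n_good_def)
  finally show ?thesis .
qed

definition bad_near_good :: "'v \<Rightarrow> int set" where
  "bad_near_good x = {y. \<not> good x y \<and> (\<exists>u z. E x u \<and> good u z \<and> \<bar>y - z\<bar> \<le> M)}"

lemma card_bad_near_good_le: "finite (bad_near_good x) \<and> card (bad_near_good x) \<le> nat (4 * M)"
proof -
  define lo hi where "lo = (if isev x then {b - 2 * M .. a - 1} else {a - M .. b - M - 1})"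
    and "hi = (if isev x then {b + 1 .. a + 2 * M} else {a + M + 1 .. b + M})"
  have "bad_near_good x \<subseteq> lo \<union> hi"
    using isev_E[of x] by (auto simp: bad_near_good_def good_def lo_def hi_def split: if_splits)
  moreover have "card (lo \<union> hi) \<le> nat (4 * M)"
    using card_Un_le[of lo hi] a_le_b b_minus_a_le M_ge_1 by (simp add: lo_def hi_def split: if_splits)
  moreover have "finite (lo \<union> hi)" by (simp add: lo_def hi_def)
  ultimately show ?thesis using card_mono[of "lo \<union> hi" "bad_near_good x"] finite_subset by fastforce
qed

definition local_configs :: "'v set \<Rightarrow> ('v \<Rightarrow> int) set" where
  "local_configs A = {\<phi> \<in> extensional (nbhd A).
      (\<forall>v\<in>A. \<not> good v (\<phi> v)) \<and> (\<forall>u\<in>vboundary E A. good u (\<phi> u))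
      \<and> (\<forall>x\<in>nbhd A. \<forall>y\<in>nbhd A. E x y \<longrightarrow> \<bar>\<phi> x - \<phi> y\<bar> \<le> M)}"

lemma card_restrict_local_configs_le:
  assumes "finite A"
  shows "finite ((\<lambda>\<phi>. restrict \<phi> A) ` local_configs A)
    \<and> card ((\<lambda>\<phi>. restrict \<phi> A) ` local_configs A) \<le> nat (4 * M) ^ card A"
proof (rule card_restrict_image_le[where E = E and M = M and Z = bad_near_good])
  fix \<phi> x u assume \<phi>: "\<phi> \<in> local_configs A" and x: "x \<in> A" and u: "u \<notin> A" "E x u"
  then have "u \<in> vboundary E A" using E_sym by (auto simp: vboundary_def)
  then show "\<phi> x \<in> bad_near_good x"
    using \<phi> x u(2) unfolding bad_near_good_def local_configs_def nbhd_def by blast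
qed (use E_rtranclp infinite_vertices assms card_bad_near_good_le M_ge_1 in
    \<open>auto simp: local_configs_def nbhd_def\<close>)

definition boundary_choices :: "'v set \<Rightarrow> ('v \<Rightarrow> int) \<Rightarrow> ('v \<Rightarrow> int) set" where
  "boundary_choices A \<psi> =
     (\<Pi>\<^sub>E u\<in>vboundary E A. {z. good u z \<and> (\<forall>v\<in>A. E u v \<longrightarrow> \<bar>z - \<psi> v\<bar> \<le> M)})"

lemma card_boundary_choices_le:
  assumes finA: "finite A" and bad: "\<And>v. v \<in> A \<Longrightarrow> \<not> good v (\<psi> v)"
  shows "finite (boundary_choices A \<psi>)
    \<and> card (boundary_choices A \<psi>) \<le> (\<Prod>u\<in>vboundary E A. n_good u - 1)"
proof -
  have fin: "finite {z. good u z \<and> (\<forall>v\<in>A. E u v \<longrightarrow> \<bar>z - \<psi> v\<bar> \<le> M)}" for u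
    using finite_good by (rule rev_finite_subset) auto
  have "card {z. good u z \<and> (\<forall>v\<in>A. E u v \<longrightarrow> \<bar>z - \<psi> v\<bar> \<le> M)} \<le> n_good u - 1"
    if u: "u \<in> vboundary E A" for u
  proof -
    obtain v where v: "v \<in> A" "E u v" using vboundary_nbr[OF u] E_sym by blast
    have "{z. good u z \<and> (\<forall>v\<in>A. E u v \<longrightarrow> \<bar>z - \<psi> v\<bar> \<le> M)}
        \<subseteq> {z. good u z \<and> \<bar>z - \<psi> v\<bar> \<le> M}"
      using v by auto
    moreover have "finite {z. good u z \<and> \<bar>z - \<psi> v\<bar> \<le> M}"
      using finite_good by (rule rev_finite_subset) auto
    moreover have "card {z. good u z \<and> \<bar>z - \<psi> v\<bar> \<le> M} \<le> n_good u - 1"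
      using card_good_near_bad_le[OF v(2) bad[OF v(1)]] .
    ultimately show ?thesis using card_mono order_trans by blast
  qed
  then show ?thesis
    using fin finite_vboundary[OF finA]
    by (auto simp: boundary_choices_def card_PiE intro!: prod_mono finite_PiE)
qed

lemma card_local_configs_le:
  assumes finA: "finite A"
  shows "finite (local_configs A)
    \<and> card (local_configs A) \<le> nat (4 * M) ^ card A * (\<Prod>u\<in>vboundary E A. n_good u - 1)"
proof -
  let ?B = "vboundary E A"
  have "finite (local_configs A) \<and> card (local_configs A)
      \<le> card ((\<lambda>\<phi>. restrict \<phi> A) ` local_configs A) * (\<Prod>u\<in>?B. n_good u - 1)"
  proof (rule card_le_card_image_mult[where q = "\<lambda>\<phi>. restrict \<phi> ?B" and C = "boundary_choices A"])
    show "inj_on (\<lambda>\<phi>. (restrict \<phi> A, restrict \<phi> ?B)) (local_configs A)"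
    proof (rule inj_onI)
      fix \<phi> \<psi> assume "\<phi> \<in> local_configs A" "\<psi> \<in> local_configs A"
        and eq: "(restrict \<phi> A, restrict \<phi> ?B) = (restrict \<psi> A, restrict \<psi> ?B)"
      then have "\<phi> \<in> extensional (nbhd A)" "\<psi> \<in> extensional (nbhd A)" by (auto simp: local_configs_def)
      then show "\<phi> = \<psi>"
        using eq by (intro extensionalityI) (auto simp: nbhd_def fun_eq_iff split: if_splits)
    qed
    show "finite ((\<lambda>\<phi>. restrict \<phi> A) ` local_configs A)"
      using card_restrict_local_configs_le[OF finA] by blast
  next
    fix \<phi> assume \<phi>: "\<phi> \<in> local_configs A"
    show "restrict \<phi> ?B \<in> boundary_choices A (restrict \<phi> A)"
      using \<phi> by (auto simp: boundary_choices_def local_configs_def nbhd_def)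
    show "finite (boundary_choices A (restrict \<phi> A))
        \<and> card (boundary_choices A (restrict \<phi> A)) \<le> (\<Prod>u\<in>?B. n_good u - 1)"
      using \<phi> by (intro card_boundary_choices_le[OF finA]) (simp add: local_configs_def)
  qed
  then show ?thesis
    using card_restrict_local_configs_le[OF finA] mult_le_mono1 order_trans by blast
qed

text \<open>A necessary condition for A(f, v0) = A that refers to A only.\<close>

definition isolated_bad :: "'v set \<Rightarrow> ('v \<Rightarrow> int) set" where
  "isolated_bad A = {f \<in> Adm. (\<forall>v\<in>A. \<not> good v (f v))
      \<and> (\<forall>u\<in>nbhd G' - A. (\<exists>v\<in>A. dist_le2 E v u) \<longrightarrow> good u (f u))}"

lemma restrict_isolated_bad:
  assumes A: "A \<subseteq> G'" and f: "f \<in> isolated_bad A"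
  shows "restrict f (nbhd A) \<in> local_configs A"
proof -
  have N: "nbhd A \<subseteq> nbhd G'" using nbhd_mono[OF A] .
  have "A \<subseteq> nbhd A" "vboundary E A \<subseteq> nbhd A" by (auto simp: nbhd_def)
  moreover have "\<bar>f x - f y\<bar> \<le> M" if "x \<in> nbhd A" "y \<in> nbhd A" "E x y" for x y
  proof -
    have "f \<in> Adm" using f by (simp add: isolated_bad_def)
    moreover have "x \<in> nbhd G'" "y \<in> nbhd G'" using N that(1,2) by auto
    ultimately show ?thesis using that(3) by (simp add: Adm_iff)
  qed
  moreover have "good u (f u)" if u: "u \<in> vboundary E A" for u
  proof -
    obtain v where "v \<in> A" "E v u" using vboundary_nbr[OF u] by blast
    moreover have "u \<in> nbhd G' - A" using u N by (auto simp: nbhd_def vboundary_def)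
    ultimately show ?thesis using f by (auto simp: isolated_bad_def dist_le2_def)
  qed
  ultimately show ?thesis using f by (auto simp: local_configs_def isolated_bad_def)
qed

lemma override_isolated_bad:
  assumes A: "A \<subseteq> G'" and f: "f \<in> isolated_bad A"
    and \<phi>: "\<phi> \<in> (\<Pi>\<^sub>E v\<in>nbhd A. {y. good v y})"
  shows "override_on f \<phi> (nbhd A) \<in> Adm"
proof -
  let ?g = "override_on f \<phi> (nbhd A)"
  have N: "nbhd A \<subseteq> nbhd G'" using nbhd_mono[OF A] .
  have f_Adm: "f \<in> Adm" using f by (simp add: isolated_bad_def)
  have good_in: "good v (?g v)" if "v \<in> nbhd A" for v
    using \<phi> that by (auto simp: PiE_iff)
  have good_next: "good v (?g v)" if v: "v \<in> nbhd G'" and u: "u \<in> nbhd A" "E u v" for u v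
  proof (cases "v \<in> nbhd A")
    case False
    then have "u \<in> vboundary E A" using u E_sym by (auto simp: nbhd_def vboundary_def)
    then obtain w where w: "w \<in> A" "E w u" using vboundary_nbr by blast
    then have "dist_le2 E w v" using u(2) by (auto simp: dist_le2_def)
    moreover have "v \<in> nbhd G' - A" using v False by (auto simp: nbhd_def)
    ultimately show ?thesis using f False w(1) by (auto simp: isolated_bad_def override_on_def)
  qed (rule good_in)
  show ?thesis unfolding Adm_iff
  proof (intro conjI ballI allI impI)
    fix v assume "v \<notin> nbhd G'"
    then show "?g v = 0" using N f_Adm by (auto simp: Adm_iff override_on_def)
  next
    fix u v assume uv: "u \<in> nbhd G'" "v \<in> nbhd G'" "E u v"
    show "\<bar>?g u - ?g v\<bar> \<le> M"
    proof (cases "u \<in> nbhd A \<or> v \<in> nbhd A")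
      case True
      then have "good u (?g u) \<and> good v (?g v)" using good_in good_next uv E_sym by blast
      then show ?thesis using good_Lipschitz uv(3) by blast
    next
      case False
      then show ?thesis using f_Adm uv by (auto simp: Adm_iff override_on_def)
    qed
  next
    fix v assume "v \<in> vboundary E G'"
    then show "good v (?g v)" using f_Adm good_in by (cases "v \<in> nbhd A") (auto simp: Adm_iff override_on_def)
  qed
qed

lemma card_isolated_bad_le_outer:
  assumes A: "A \<subseteq> G'" and finA: "finite A"
  shows "card (isolated_bad A)
    \<le> card ((\<lambda>f. restrict f (- nbhd A)) ` isolated_bad A) * card (local_configs A)"
proof -
  let ?N = "nbhd A"
  have fin_bad: "finite (isolated_bad A)"
    using finite_Adm by (rule rev_finite_subset) (auto simp: isolated_bad_def)
  have "finite (isolated_bad A) \<and> card (isolated_bad A)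
      \<le> card ((\<lambda>f. restrict f (- ?N)) ` isolated_bad A) * card (local_configs A)"
  proof (rule card_le_card_image_mult[where q = "\<lambda>f. restrict f ?N" and C = "\<lambda>_. local_configs A"])
    show "inj_on (\<lambda>f. (restrict f (- ?N), restrict f ?N)) (isolated_bad A)"
    proof (rule inj_onI)
      fix f g assume eq: "(restrict f (- ?N), restrict f ?N) = (restrict g (- ?N), restrict g ?N)"
      from eq have e1: "restrict f (- ?N) = restrict g (- ?N)" and e2: "restrict f ?N = restrict g ?N"
        by (simp_all only: prod.inject)
      have "f x = g x" for x
        using fun_cong[OF e1, of x] fun_cong[OF e2, of x] by (cases "x \<in> ?N") simp_all
      then show "f = g" by (rule ext)
    qed
  qed (use fin_bad A restrict_isolated_bad card_local_configs_le[OF finA] in auto)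
  then show ?thesis by blast
qed

text \<open>Any good values on A \<union> \<partial>A complete the outer part of some f \<in> isolated_bad A
  to an admissible function.\<close>

lemma card_outer_mult_le:
  assumes A: "A \<subseteq> G'" and finA: "finite A"
  shows "card ((\<lambda>f. restrict f (- nbhd A)) ` isolated_bad A) * (\<Prod>v\<in>nbhd A. n_good v) \<le> card Adm"
proof -
  let ?N = "nbhd A"
  let ?T = "(\<lambda>f. restrict f (- ?N)) ` isolated_bad A"
  let ?Good = "\<Pi>\<^sub>E v\<in>?N. {y. good v y}"
  have inj: "inj_on (\<lambda>(\<tau>, \<phi>). override_on \<tau> \<phi> ?N) (?T \<times> ?Good)"
  proof (rule inj_onI, clarify)
    fix f \<phi> g \<psi>
    assume \<phi>: "\<phi> \<in> ?Good" and \<psi>: "\<psi> \<in> ?Good"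
      and eq: "override_on (restrict f (- ?N)) \<phi> ?N = override_on (restrict g (- ?N)) \<psi> ?N"
    have "restrict f (- ?N) x = restrict g (- ?N) x \<and> \<phi> x = \<psi> x" for x
      using fun_cong[OF eq, of x] \<phi> \<psi> by (cases "x \<in> ?N") (auto simp: override_on_def PiE_def extensional_def)
    then show "restrict f (- ?N) = restrict g (- ?N) \<and> \<phi> = \<psi>" by auto
  qed
  have "(\<lambda>(\<tau>, \<phi>). override_on \<tau> \<phi> ?N) ` (?T \<times> ?Good) \<subseteq> Adm"
  proof clarify
    fix f \<phi> assume "f \<in> isolated_bad A" "\<phi> \<in> ?Good"
    moreover have "override_on (restrict f (- ?N)) \<phi> ?N = override_on f \<phi> ?N"
      by (auto simp: override_on_def)
    ultimately show "override_on (restrict f (- ?N)) \<phi> ?N \<in> Adm"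
      using override_isolated_bad[OF A] by simp
  qed
  then have "card ((\<lambda>(\<tau>, \<phi>). override_on \<tau> \<phi> ?N) ` (?T \<times> ?Good)) \<le> card Adm"
    by (rule card_mono[OF finite_Adm])
  moreover have "card ?Good = (\<Prod>v\<in>?N. n_good v)"
    using finite_nbhd[OF finA] by (simp add: card_PiE n_good_def)
  ultimately show ?thesis using card_image[OF inj] by (simp add: card_cartesian_product)
qed

lemma card_isolated_bad_mult_le:
  assumes A: "A \<subseteq> G'" and finA: "finite A"
  shows "card (isolated_bad A) * (\<Prod>v\<in>nbhd A. n_good v) \<le> card (local_configs A) * card Adm"
proof -
  let ?T = "(\<lambda>f. restrict f (- nbhd A)) ` isolated_bad A"
  have "card (isolated_bad A) * (\<Prod>v\<in>nbhd A. n_good v)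
      \<le> card ?T * card (local_configs A) * (\<Prod>v\<in>nbhd A. n_good v)"
    by (rule mult_le_mono1[OF card_isolated_bad_le_outer[OF A finA]])
  also have "\<dots> = card (local_configs A) * (card ?T * (\<Prod>v\<in>nbhd A. n_good v))"
    by (simp add: ac_simps)
  also have "\<dots> \<le> card (local_configs A) * card Adm"
    by (rule mult_le_mono2[OF card_outer_mult_le[OF A finA]])
  finally show ?thesis .
qed

definition rho :: real where
  "rho = 2 * M / (2 * M + 1)"

lemma rho_bounds: "0 < rho" "rho \<le> 1"
  using M_ge_1 by (auto simp: rho_def)

lemma prod_n_good_pred_le:
  "(\<Prod>u\<in>B. real (n_good u - 1)) \<le> rho ^ card B * (\<Prod>u\<in>B. real (n_good u))"
proof (cases "finite B")
  case True
  have "(\<Prod>u\<in>B. real (n_good u - 1)) \<le> (\<Prod>u\<in>B. rho * real (n_good u))"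
  proof (rule prod_mono)
    fix u
    have "real (n_good u) \<le> 2 * M + 1" using n_good_bounds(2)[of u] by linarith
    then have "real (n_good u) - 1 \<le> rho * real (n_good u)"
      using M_ge_1 by (simp add: rho_def field_simps)
    then show "0 \<le> real (n_good u - 1) \<and> real (n_good u - 1) \<le> rho * real (n_good u)"
      using n_good_bounds(1)[of u] by (simp add: of_nat_diff)
  qed
  then show ?thesis by (simp add: prod.distrib True)
qed simp

lemma card_isolated_bad_le:
  assumes A: "A \<subseteq> G'" and finA: "finite A"
  shows "real (card (isolated_bad A)) \<le> (4 * M) ^ card A * rho ^ card (vboundary E A) * card Adm"
proof -
  let ?B = "vboundary E A"
  let ?P = "\<Prod>v\<in>nbhd A. real (n_good v)"
  let ?Q = "\<Prod>u\<in>?B. real (n_good u - 1)"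
  let ?c = "(4 * real_of_int M) ^ card A"
  have n_good_pos: "0 < real (n_good v)" for v using n_good_bounds(1)[of v] by simp
  have P_split: "?P = (\<Prod>v\<in>A. real (n_good v)) * (\<Prod>u\<in>?B. real (n_good u))"
    unfolding nbhd_def using finA finite_vboundary[OF finA]
    by (intro prod.union_disjoint) (auto simp: vboundary_def)
  have "1 \<le> (\<Prod>v\<in>A. real (n_good v))" using n_good_bounds(1) by (intro prod_ge_1) simp
  then have "(\<Prod>u\<in>?B. real (n_good u)) \<le> ?P"
    unfolding P_split using n_good_pos by (simp add: prod_pos less_imp_le)
  then have Q: "?Q \<le> rho ^ card ?B * ?P"
    using prod_n_good_pred_le[of ?B] rho_bounds(1) by (smt (verit) mult_left_mono zero_le_power)
  have "real (card (local_configs A)) \<le> real (nat (4 * M) ^ card A * (\<Prod>u\<in>?B. n_good u - 1))"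
    using card_local_configs_le[OF finA] by (simp only: of_nat_le_iff)
  also have "\<dots> = ?c * ?Q" using M_ge_1 by (simp add: of_nat_prod)
  finally have LC: "real (card (local_configs A)) \<le> ?c * ?Q" .
  have "real (card (isolated_bad A)) * ?P \<le> real (card (local_configs A)) * card Adm"
    using card_isolated_bad_mult_le[OF A finA] by (simp flip: of_nat_mult of_nat_prod)
  also have "\<dots> \<le> ?c * ?Q * card Adm" using LC by (simp add: mult_right_mono)
  also have "\<dots> \<le> ?c * (rho ^ card ?B * ?P) * card Adm"
    using Q M_ge_1 by (intro mult_right_mono mult_left_mono) simp_all
  also have "\<dots> = (?c * rho ^ card ?B * card Adm) * ?P" by (simp add: ac_simps)
  finally show ?thesis
    using prod_pos[of "nbhd A" "\<lambda>v. real (n_good v)"] n_good_pos by (simp add: mult_le_cancel_right_pos)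
qed

lemma card_isolated_bad_le_cheeger:
  assumes A: "A \<subseteq> G'" and finA: "finite A" and ne: "A \<noteq> {}"
  shows "real (card (isolated_bad A)) \<le> (4 * M) ^ card A * rho powr (cheeger E * card A) * card Adm"
proof -
  have "0 < real (card A)" using finA ne by (simp add: card_gt_0_iff)
  then have "cheeger E * card A \<le> card (vboundary E A)"
    using cheeger_le[of A E] finA ne by (simp add: pos_le_divide_eq)
  have "rho ^ card (vboundary E A) = rho powr real (card (vboundary E A))"
    using rho_bounds by (simp add: powr_realpow)
  also have "\<dots> \<le> rho powr (cheeger E * card A)"
    using \<open>cheeger E * card A \<le> _\<close> rho_bounds by (intro powr_mono') auto
  finally have "rho ^ card (vboundary E A) \<le> rho powr (cheeger E * card A)" .
  then have "(4 * M) ^ card A * rho ^ card (vboundary E A) * card Adm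
      \<le> (4 * M) ^ card A * rho powr (cheeger E * card A) * card Adm"
    using M_ge_1 by (intro mult_right_mono mult_left_mono) auto
  then show ?thesis using card_isolated_bad_le[OF A finA] by linarith
qed

abbreviation dist2_nbr :: "'v \<Rightarrow> 'v \<Rightarrow> bool" where
  "dist2_nbr p x \<equiv> x \<noteq> p \<and> dist_le2 E p x"

lemma card_dist2_nbrs_le: "finite {x. dist2_nbr p x} \<and> card {x. dist2_nbr p x} \<le> d\<^sup>2"
proof -
  let ?N = "{u. E p u}"
  let ?R = "?N \<union> (\<Union>w\<in>?N. {u. E w u} - {p})"
  have sub: "{x. dist2_nbr p x} \<subseteq> ?R" by (auto simp: dist_le2_def)
  have fin: "finite ?R" using finite_nbrs by auto
  have "card ?R \<le> card ?N + (\<Sum>w\<in>?N. card ({u. E w u} - {p}))"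
    using card_Un_le[of ?N "\<Union>w\<in>?N. {u. E w u} - {p}"]
      card_UN_le[OF finite_nbrs[of p], of "\<lambda>w. {u. E w u} - {p}"]
    by linarith
  also have "\<dots> \<le> d + (\<Sum>w\<in>?N. d - 1)"
  proof (intro add_mono sum_mono)
    fix w assume "w \<in> ?N"
    then have "p \<in> {u. E w u}" using E_sym by auto
    then show "card ({u. E w u} - {p}) \<le> d - 1" using finite_nbrs card_nbrs_le[of w] by simp
  qed (rule card_nbrs_le)
  also have "\<dots> \<le> d + d * (d - 1)" using card_nbrs_le[of p] by (simp add: mult_le_mono1)
  also have "\<dots> = d\<^sup>2" by (cases d) (simp_all add: power2_eq_square)
  finally show ?thesis using order_trans[OF card_mono[OF fin sub]] finite_subset[OF sub fin] by blast
qed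

lemma Acomp_subset_Bset: "bad_comp f v0 \<subseteq> bad_set f"
proof
  fix u assume "u \<in> bad_comp f v0"
  then have "v0 \<in> bad_set f"
    and path: "(\<lambda>x y. x \<in> bad_set f \<and> y \<in> bad_set f \<and> dist_le2 E x y)\<^sup>*\<^sup>* v0 u"
    by (simp_all add: Acomp_def Let_def)
  from path this(1) show "u \<in> bad_set f" by (induction rule: rtranclp_induct) auto
qed

lemma Acomp_isolated_bad:
  assumes f: "f \<in> Adm" and v0: "v0 \<in> bad_comp f v0"
  shows "f \<in> isolated_bad (bad_comp f v0)"
proof -
  let ?B = "bad_set f" and ?A = "bad_comp f v0"
  let ?R = "\<lambda>x y. x \<in> ?B \<and> y \<in> ?B \<and> dist_le2 E x y"
  have "\<not> good v (f v)" if "v \<in> ?A" for v using Acomp_subset_Bset that by (auto simp: Bset_eq)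
  moreover have "good u (f u)" if u: "u \<in> nbhd G' - ?A" and v: "v \<in> ?A" "dist_le2 E v u" for u v
  proof (rule ccontr)
    assume "\<not> good u (f u)"
    then have "u \<in> ?B" using u by (simp add: Bset_eq)
    have v0B: "v0 \<in> ?B" and path: "?R\<^sup>*\<^sup>* v0 v" using v(1) by (simp_all add: Acomp_def Let_def)
    have "?R v u" using v Acomp_subset_Bset \<open>u \<in> ?B\<close> by blast
    with path have "?R\<^sup>*\<^sup>* v0 u" by (rule rtranclp.rtrancl_into_rtrancl)
    then have "u \<in> ?A" using v0B by (simp add: Acomp_def Let_def)
    then show False using u by simp
  qed
  ultimately show ?thesis using f by (auto simp: isolated_bad_def)
qed

lemma connected_from_Acomp:
  assumes v0: "v0 \<in> bad_comp f v0"
  shows "connected_from dist2_nbr v0 (bad_comp f v0)"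
  unfolding connected_from_def
proof (intro conjI allI impI)
  let ?B = "bad_set f" and ?A = "bad_comp f v0"
  let ?R = "\<lambda>x y. x \<in> ?B \<and> y \<in> ?B \<and> dist_le2 E x y"
  have A_iff: "u \<in> ?A \<longleftrightarrow> v0 \<in> ?B \<and> ?R\<^sup>*\<^sup>* v0 u" for u by (simp add: Acomp_def Let_def)
  show "v0 \<in> ?A" by (rule v0)
  fix S assume S: "v0 \<in> S" "S \<subset> ?A"
  then obtain y where y: "y \<in> ?A" "y \<notin> S" by blast
  from y(1) have "?R\<^sup>*\<^sup>* v0 y" unfolding A_iff by (rule conjunct2)
  from rtranclp_exit_edge[OF this S(1) y(2)] obtain p x
    where px: "?R\<^sup>*\<^sup>* v0 p" "p \<in> S" "x \<notin> S" "?R p x"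
    by blast
  have "?R\<^sup>*\<^sup>* v0 x" using px(1,4) by (rule rtranclp.rtrancl_into_rtrancl)
  then have "x \<in> ?A" using v0 unfolding A_iff by blast
  then have "x \<in> ?A - S" using px(3) by (rule DiffI)
  moreover have "dist2_nbr p x" using px(2-4) by auto
  ultimately show "\<exists>p\<in>S. \<exists>x\<in>?A - S. dist2_nbr p x" using px(2) by (intro bexI)
qed

definition candidates :: "'v \<Rightarrow> nat \<Rightarrow> 'v set set" where
  "candidates v0 n = {A. A \<subseteq> G' \<and> finite A \<and> card A = n \<and> connected_from dist2_nbr v0 A}"

lemma card_candidates_le: "finite (candidates v0 n) \<and> card (candidates v0 n) \<le> (4 * d\<^sup>2) ^ (n - 1)"
proof -
  have sub: "candidates v0 n \<subseteq> {A. finite A \<and> card A = n \<and> connected_from dist2_nbr v0 A}"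
    by (auto simp: candidates_def)
  have "finite {A. finite A \<and> card A = n \<and> connected_from dist2_nbr v0 A}
      \<and> card {A. finite A \<and> card A = n \<and> connected_from dist2_nbr v0 A} \<le> (4 * d\<^sup>2) ^ (n - 1)"
    by (rule card_connected_from_le) (rule card_dist2_nbrs_le)
  then show ?thesis using order_trans[OF card_mono[OF _ sub]] finite_subset[OF sub] by blast
qed

lemma Acomp_card_event_subset:
  assumes "1 \<le> n"
  shows "Adm \<inter> {f. card (bad_comp f v0) = n} \<subseteq> (\<Union>A\<in>candidates v0 n. isolated_bad A)"
proof
  fix f assume f: "f \<in> Adm \<inter> {f. card (bad_comp f v0) = n}"
  let ?A = "bad_comp f v0"
  have "?A \<noteq> {}" using f assms by auto
  then have "v0 \<in> ?A" by (auto simp: Acomp_def Let_def)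
  moreover have "?A \<subseteq> G'" using Acomp_subset_Bset Bset_subset f by blast
  ultimately have "?A \<in> candidates v0 n"
    using f connected_from_Acomp finite_subset[OF _ finite_G'] by (auto simp: candidates_def)
  then show "f \<in> (\<Union>A\<in>candidates v0 n. isolated_bad A)" using Acomp_isolated_bad f \<open>v0 \<in> ?A\<close> by blast
qed

lemma prob_Acomp_card_le:
  assumes v0: "v0 \<in> G'" and n: "1 \<le> n"
  shows "measure_pmf.prob (nu E isev G' M a b) {f. card (bad_comp f v0) = n}
    \<le> (4 * real d ^ 2) ^ (n - 1) * ((4 * M) ^ n * rho powr (cheeger E * n))"
proof -
  let ?Ev = "Adm \<inter> {f. card (bad_comp f v0) = n}"
  let ?C = "candidates v0 n"
  let ?K = "(4 * real_of_int M) ^ n * rho powr (cheeger E * n)"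
  have fin_C: "finite ?C" using card_candidates_le by blast
  have fin_bad: "finite (isolated_bad A)" for A
    using finite_Adm by (rule rev_finite_subset) (auto simp: isolated_bad_def)
  have "card ?Ev \<le> card (\<Union>A\<in>?C. isolated_bad A)"
    using fin_C fin_bad by (intro card_mono[OF _ Acomp_card_event_subset[OF n]]) blast
  also have "\<dots> \<le> (\<Sum>A\<in>?C. card (isolated_bad A))" by (rule card_UN_le[OF fin_C])
  finally have "real (card ?Ev) \<le> (\<Sum>A\<in>?C. real (card (isolated_bad A)))"
    by (simp only: of_nat_le_iff flip: of_nat_sum)
  also have "\<dots> \<le> (\<Sum>A\<in>?C. ?K * card Adm)"
  proof (rule sum_mono)
    fix A assume "A \<in> ?C"
    then have "A \<subseteq> G'" "finite A" "card A = n" "A \<noteq> {}" using n by (auto simp: candidates_def)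
    then show "real (card (isolated_bad A)) \<le> ?K * card Adm"
      using card_isolated_bad_le_cheeger[of A] by (simp add: mult.assoc)
  qed
  also have "\<dots> = card ?C * (?K * card Adm)" by simp
  also have "\<dots> \<le> (4 * real d ^ 2) ^ (n - 1) * (?K * card Adm)"
  proof (rule mult_right_mono)
    have "real (card ?C) \<le> real ((4 * d\<^sup>2) ^ (n - 1))"
      using card_candidates_le by (simp only: of_nat_le_iff)
    then show "real (card ?C) \<le> (4 * real d ^ 2) ^ (n - 1)" by simp
    show "0 \<le> ?K * card Adm" using rho_bounds M_ge_1 by simp
  qed
  finally have "real (card ?Ev) / card Adm \<le> (4 * real d ^ 2) ^ (n - 1) * ?K"
    using finite_Adm Adm_nonempty by (simp add: pos_divide_le_eq card_gt_0_iff mult.assoc)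
  then show ?thesis
    using finite_Adm Adm_nonempty by (simp add: nu_def measure_pmf_of_set)
qed

lemma degree_ge_1: "1 \<le> d"
proof -
  fix v :: 'v
  obtain u where "u \<notin> {v}" using ex_new_if_finite[OF infinite_vertices, of "{v}"] by blast
  have "E\<^sup>*\<^sup>* v u" by (rule E_rtranclp)
  then obtain w where "E v w" using \<open>u \<notin> {v}\<close> by (cases rule: converse_rtranclpE) auto
  then have "card {w. E v w} \<noteq> 0" using finite_nbrs by auto
  then show ?thesis using card_nbrs_le[of v] by linarith
qed

lemma cheeger_le_degree: "cheeger E \<le> d"
proof -
  fix v :: 'v
  have "vboundary E {v} \<subseteq> {u. E v u}" using E_sym by (auto simp: vboundary_def)
  then have "card (vboundary E {v}) \<le> d"
    using order_trans[OF card_mono[OF finite_nbrs] card_nbrs_le] by blast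
  then show ?thesis using cheeger_le[of "{v}" E] by simp
qed

lemma prob_Acomp_card_le_exp:
  assumes v0: "v0 \<in> G'" and n: "1 \<le> n"
    and h: "4 * M * ln (real d ^ 4 * (4 * M + 1)) \<le> cheeger E"
  shows "measure_pmf.prob (nu E isev G' M a b) {f. card (bad_comp f v0) = n}
    \<le> exp (- (cheeger E * n / (4 * M)))"
proof -
  let ?h = "cheeger E"
  have key: "16 * M * real d ^ 2 * rho powr ?h \<le> exp (- (?h / (4 * M)))"
    using key_inequality[OF M_ge_1 _ h cheeger_le_degree] degree_ge_1 by (simp add: rho_def)
  have "measure_pmf.prob (nu E isev G' M a b) {f. card (bad_comp f v0) = n}
      \<le> (4 * real d ^ 2) ^ (n - 1) * ((4 * M) ^ n * rho powr (?h * n))"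
    by (rule prob_Acomp_card_le[OF v0 n])
  also have "\<dots> \<le> (4 * real d ^ 2) ^ n * ((4 * M) ^ n * rho powr (?h * n))"
  proof -
    have "1 \<le> real d ^ 2" using degree_ge_1 by (intro one_le_power) simp
    then show ?thesis using rho_bounds M_ge_1 by (intro mult_right_mono power_increasing) auto
  qed
  also have "\<dots> = (16 * M * real d ^ 2 * rho powr ?h) ^ n"
  proof -
    have "(4 :: real) ^ n * 4 ^ n = 16 ^ n" by (simp flip: power_mult_distrib)
    then show ?thesis using rho_bounds by (simp add: power_mult_distrib powr_power mult_ac)
  qed
  also have "\<dots> \<le> exp (- (?h / (4 * M))) ^ n"
    using key rho_bounds M_ge_1 by (intro power_mono) auto
  also have "\<dots> = exp (- (?h * n / (4 * M)))" by (simp flip: exp_of_nat_mult)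
  finally show ?thesis .
qed

end

theorem proposition3p1:
  fixes E :: "'v \<Rightarrow> 'v \<Rightarrow> bool" and isev :: "'v \<Rightarrow> bool"
    and d :: nat and h :: real and M a b :: int and G' :: "'v set"
  assumes "infinite (UNIV :: 'v set)"
    and "simple_graph E" and "connected_graph E" and "bipartition E isev"
    and "max_degree E d" and "h = cheeger E"
    and "M \<ge> 1" and "0 \<le> b - a" and "b - a \<le> 2 * M"
    and "finite G'"
    and "h \<ge> 4 * M * ln (real d ^ 4 * (4 * M + 1))"
  shows "\<forall>v0\<in>G'. \<forall>n::nat. n \<ge> 1 \<longrightarrow>
           measure_pmf.prob (nu E isev G' M a b) {f. card (Acomp E isev G' M a b f v0) = n}
             \<le> exp (- (h * n / (4 * M)))"
proof -
  interpret lipschitz_setting E isev G' M a b d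
    using assms(1-5,7-10) by unfold_locales
  show ?thesis using prob_Acomp_card_le_exp assms(6,11) by simp
qed

end
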